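(* Let $A$ be a finite set of lines in $\mathbb{R}^2$. For every open halfplane $S_1$ and every set $S_2\subseteq\mathbb{R}^2$, $$\mu_A(S_1\cup S_2)\le \mu_A(S_1)\,\mu_A(S_2).$$
   Context: For a finite set $A$ of lines in $\mathbb{R}^2$, $V(A)$ denotes the set of all intersection points of pairs of lines of $A$. For $S\subseteq\mathbb{R}^2$, $\mu_A(S)=\max\{|A'| : A'\subseteq A,\ V(A')\subseteq S\}$ (so $\mu_A(S)\ge 1$ whenever $A\neq\emptyset$). *)

theory Defs
  imports "HOL-Analysis.Analysis"
begin

definition is_line :: "(real^2) set \<Rightarrow> bool" where
  "is_line L \<longleftrightarrow> (\<exists>p v. v \<noteq> 0 \<and> L = {p + t *\<^sub>R v | t. True})"

definition V :: "(real^2) set set \<Rightarrow> (real^2) set" where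
  "V A = (\<Union>{L1 \<inter> L2 | L1 L2. L1 \<in> A \<and> L2 \<in> A \<and> L1 \<noteq> L2})"

definition mu :: "(real^2) set set \<Rightarrow> (real^2) set \<Rightarrow> nat" where
  "mu A S = Max {card A' | A'. A' \<subseteq> A \<and> V A' \<subseteq> S}"

definition open_halfplane :: "(real^2) set \<Rightarrow> bool" where
  "open_halfplane H \<longleftrightarrow> (\<exists>a b. a \<noteq> 0 \<and> H = {x. a \<bullet> x > b})"

end

theory Submission
  imports Defs
begin

(* Write S1 = {x. a \<bullet> x > b} and fix a subfamily B of A with V B \<subseteq> S1 \<union> S2 and
   card B = mu A (S1 \<union> S2).  A line not parallel to the boundary a \<bullet> x = b is the graph
   "perp a \<bullet> x = intercept + (a \<bullet> x - b) * slope" over the height a \<bullet> x - b; the pair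
   (intercept, slope) determines the line.  We order the lines of B: L precedes M if both cross
   the boundary with intercept L \<le> intercept M and slope L < slope M, or if L is parallel to the
   boundary and lies outside S1 (with a tie-break by an injective labelling among such lines).
   Two comparable lines meet outside S1, two incomparable lines meet inside S1.  Hence the vertices
   of a chain lie in S2 (chains have at most mu A S2 lines) and those of an antichain lie in S1
   (antichains have at most mu A S1 lines).  A finite strict order with chains of size \<le> p and
   antichains of size \<le> q has at most p * q elements (the dual of Dilworth's theorem, proved
   via the height function). *)

section \<open>Finite strict orders: chains times antichains\<close>

context
  fixes X :: "'a set" and R :: "'a \<Rightarrow> 'a \<Rightarrow> bool"
  assumes fin: "finite X"
    and irr: "\<And>x. x \<in> X \<Longrightarrow> \<not> R x x"
    and tr: "\<And>x y z. x \<in> X \<Longrightarrow> y \<in> X \<Longrightarrow> z \<in> X \<Longrightarrow> R x y \<Longrightarrow> R y z \<Longrightarrow> R x z"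
begin

(* Height function: sending x to the largest size of a chain ending in x gives a strictly
   monotone map into {1..p} whenever all chains have at most p elements. *)
lemma strict_order_height:
  assumes chains: "\<And>C. C \<subseteq> X \<Longrightarrow> (\<forall>x\<in>C. \<forall>y\<in>C. x \<noteq> y \<longrightarrow> R x y \<or> R y x) \<Longrightarrow> card C \<le> p"
  shows "\<exists>h. (\<forall>x\<in>X. h x \<in> {1..p}) \<and> (\<forall>x\<in>X. \<forall>y\<in>X. R x y \<longrightarrow> h x < h y)"
proof -
  define ends_in where "ends_in x C \<longleftrightarrow> C \<subseteq> X \<and> (\<forall>u\<in>C. \<forall>v\<in>C. u \<noteq> v \<longrightarrow> R u v \<or> R v u)
      \<and> x \<in> C \<and> (\<forall>y\<in>C. y = x \<or> R y x)" for x C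
  define h where "h x = Max {card C | C. ends_in x C}" for x
  have fin_sizes: "finite {card C | C. ends_in x C}" for x
    by (rule finite_subset[of _ "card ` Pow X"]) (use fin in \<open>auto simp: ends_in_def\<close>)
  have singleton: "x \<in> X \<Longrightarrow> ends_in x {x}" for x
    unfolding ends_in_def by auto
  have h_ge: "card C \<le> h x" if "ends_in x C" for x C
    unfolding h_def using fin_sizes that by (intro Max_ge) auto
  have h_attained: "\<exists>C. ends_in x C \<and> card C = h x" if "x \<in> X" for x
  proof -
    have "{card C | C. ends_in x C} \<noteq> {}" using singleton[OF that] by blast
    from Max_in[OF fin_sizes this] show ?thesis unfolding h_def by auto
  qed
  have "h x \<in> {1..p}" if xX: "x \<in> X" for x
  proof -
    have "1 \<le> h x" using h_ge[OF singleton[OF xX]] by simp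
    moreover obtain C where "ends_in x C" "card C = h x" using h_attained[OF xX] by blast
    ultimately show ?thesis using chains[of C] unfolding ends_in_def by auto
  qed
  moreover have "h x < h y" if xX: "x \<in> X" and yX: "y \<in> X" and Rxy: "R x y" for x y
  proof -
    obtain C where C: "ends_in x C" "card C = h x" using h_attained[OF xX] by blast
    have CX: "C \<subseteq> X" using C(1) by (simp add: ends_in_def)
    have below_x: "u = x \<or> R u x" if "u \<in> C" for u
      using C(1) that by (simp add: ends_in_def)
    have below_y: "R u y" if "u \<in> C" for u
      using below_x[OF that] tr[of u x y] that CX xX yX Rxy by auto
    have "y \<notin> C" using below_y irr yX by blast
    moreover have "ends_in y (insert y C)"
      using C(1) below_y yX unfolding ends_in_def by auto
    ultimately have "Suc (card C) \<le> h y"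
      using h_ge[of y "insert y C"] finite_subset[OF CX fin] by simp
    thus ?thesis using C(2) by simp
  qed
  ultimately show ?thesis by blast
qed

(* Dual Dilworth bound: the level sets of the height function are antichains. *)
lemma card_le_chain_times_antichain:
  assumes chains: "\<And>C. C \<subseteq> X \<Longrightarrow> (\<forall>x\<in>C. \<forall>y\<in>C. x \<noteq> y \<longrightarrow> R x y \<or> R y x) \<Longrightarrow> card C \<le> p"
    and antichains: "\<And>C. C \<subseteq> X \<Longrightarrow> (\<forall>x\<in>C. \<forall>y\<in>C. \<not> R x y) \<Longrightarrow> card C \<le> q"
  shows "card X \<le> p * q"
proof -
  obtain h where h_range: "\<forall>x\<in>X. h x \<in> {1..p}"
    and h_mono: "\<forall>x\<in>X. \<forall>y\<in>X. R x y \<longrightarrow> h x < h y"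
    using strict_order_height[OF chains] by blast
  have "X = (\<Union>k\<in>{1..p}. {x\<in>X. h x = k})" using h_range by auto
  hence "card X \<le> (\<Sum>k\<in>{1..p}. card {x\<in>X. h x = k})"
    by (metis card_UN_le finite_atLeastAtMost)
  also have "\<dots> \<le> (\<Sum>k\<in>{1..p}. q)"
    by (intro sum_mono antichains) (use h_mono in fastforce)+
  finally show ?thesis by simp
qed

end

section \<open>Lines as graphs over the height above a boundary line\<close>

definition perp :: "real^2 \<Rightarrow> real^2" where
  "perp a = vector [-(a$2), a$1]"

lemma perp_coordinates_eq:
  fixes a z w :: "real^2"
  assumes "a \<noteq> 0" "a \<bullet> z = a \<bullet> w" "perp a \<bullet> z = perp a \<bullet> w"
  shows "z = w"
proof -
  have e1: "a$1 * (z$1 - w$1) + a$2 * (z$2 - w$2) = 0"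
    using assms(2) by (simp add: inner_vec_def sum_2 algebra_simps)
  have e2: "a$1 * (z$2 - w$2) - a$2 * (z$1 - w$1) = 0"
    using assms(3) by (simp add: inner_vec_def sum_2 perp_def algebra_simps)
  have "a$1 \<noteq> 0 \<or> a$2 \<noteq> 0" using assms(1) by (metis exhaust_2 vec_eq_iff zero_index)
  hence pos: "a$1 * a$1 + a$2 * a$2 > 0"
    by (metis add_pos_nonneg add_nonneg_pos not_real_square_gt_zero zero_le_square)
  have "(a$1 * a$1 + a$2 * a$2) * (z$1 - w$1) = 0"
    "(a$1 * a$1 + a$2 * a$2) * (z$2 - w$2) = 0"
    using e1 e2 by algebra+
  hence "z$1 = w$1" "z$2 = w$2" using pos by auto
  thus ?thesis by (metis exhaust_2 vec_eq_iff)
qed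

definition line_rep :: "(real^2) set \<Rightarrow> (real^2) \<times> (real^2)" where
  "line_rep L = (SOME pv. snd pv \<noteq> 0 \<and> L = {fst pv + t *\<^sub>R snd pv | t. True})"

definition base :: "(real^2) set \<Rightarrow> real^2" where "base L = fst (line_rep L)"
definition dir :: "(real^2) set \<Rightarrow> real^2" where "dir L = snd (line_rep L)"

lemma line_rep:
  assumes "is_line L"
  shows "dir L \<noteq> 0" "L = {base L + t *\<^sub>R dir L | t. True}"
proof -
  obtain p v where "v \<noteq> 0 \<and> L = {p + t *\<^sub>R v | t. True}"
    using assms unfolding is_line_def by blast
  hence "\<exists>pv. snd pv \<noteq> 0 \<and> L = {fst pv + t *\<^sub>R snd pv | t. True}"
    by (intro exI[of _ "(p, v)"]) auto
  from someI_ex[OF this] show "dir L \<noteq> 0" "L = {base L + t *\<^sub>R dir L | t. True}"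
    unfolding base_def dir_def line_rep_def by auto
qed

lemma parallel_line_height:
  assumes "is_line L" "a \<bullet> dir L = 0" "x \<in> L"
  shows "a \<bullet> x = a \<bullet> base L"
proof -
  obtain t where "x = base L + t *\<^sub>R dir L" using line_rep(2)[OF assms(1)] assms(3) by blast
  thus ?thesis using assms(2) by (simp add: inner_add_right)
qed

(* For a line crossing the boundary a \<bullet> x = b: its slope relative to the height a \<bullet> x - b,
   and its intercept, the perp-coordinate of its crossing point with the boundary. *)
definition slope :: "real^2 \<Rightarrow> (real^2) set \<Rightarrow> real" where
  "slope a L = (perp a \<bullet> dir L) / (a \<bullet> dir L)"

definition intercept :: "real^2 \<Rightarrow> real \<Rightarrow> (real^2) set \<Rightarrow> real" where
  "intercept a b L = perp a \<bullet> base L - (a \<bullet> base L - b) * slope a L"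

lemma crossing_line_graph:
  assumes a0: "a \<noteq> 0" and line: "is_line L" and cross: "a \<bullet> dir L \<noteq> 0"
  shows "x \<in> L \<longleftrightarrow> perp a \<bullet> x = intercept a b L + (a \<bullet> x - b) * slope a L"
proof -
  have on_line: "perp a \<bullet> y = intercept a b L + (a \<bullet> y - b) * slope a L"
    if "y = base L + t *\<^sub>R dir L" for y t
    using that cross by (simp add: intercept_def slope_def inner_add_right field_simps)
  show ?thesis
  proof
    assume "x \<in> L"
    thus "perp a \<bullet> x = intercept a b L + (a \<bullet> x - b) * slope a L"
      using line_rep(2)[OF line] on_line by blast
  next
    assume graph: "perp a \<bullet> x = intercept a b L + (a \<bullet> x - b) * slope a L"
    define y where "y = base L + ((a \<bullet> x - a \<bullet> base L) / (a \<bullet> dir L)) *\<^sub>R dir L"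
    have "a \<bullet> y = a \<bullet> x" using cross by (simp add: y_def inner_add_right)
    moreover from this have "perp a \<bullet> y = perp a \<bullet> x" using on_line[OF y_def] graph by simp
    ultimately have "x = y" using perp_coordinates_eq[OF a0] by metis
    thus "x \<in> L" using line_rep(2)[OF line] y_def by blast
  qed
qed

lemma crossing_line_eqI:
  assumes "a \<noteq> 0" "is_line L" "a \<bullet> dir L \<noteq> 0" "is_line M" "a \<bullet> dir M \<noteq> 0"
    "intercept a b L = intercept a b M" "slope a L = slope a M"
  shows "L = M"
proof -
  have "x \<in> L \<longleftrightarrow> x \<in> M" for x
  proof -
    have "x \<in> L \<longleftrightarrow> perp a \<bullet> x = intercept a b L + (a \<bullet> x - b) * slope a L"
      by (rule crossing_line_graph[OF assms(1-3)])
    also have "\<dots> \<longleftrightarrow> perp a \<bullet> x = intercept a b M + (a \<bullet> x - b) * slope a M"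
      using assms(6,7) by simp
    also have "\<dots> \<longleftrightarrow> x \<in> M"
      by (rule crossing_line_graph[OF assms(1,4,5), symmetric])
    finally show ?thesis .
  qed
  thus ?thesis by blast
qed

section \<open>The order on lines relative to an open halfplane a \<bullet> x > b\<close>

definition precedes :: "real^2 \<Rightarrow> real \<Rightarrow> ((real^2) set \<Rightarrow> nat) \<Rightarrow>
    (real^2) set \<Rightarrow> (real^2) set \<Rightarrow> bool" where
  "precedes a b f L M \<longleftrightarrow>
     (a \<bullet> dir L \<noteq> 0 \<and> a \<bullet> dir M \<noteq> 0 \<and> intercept a b L \<le> intercept a b M \<and> slope a L < slope a M)
   \<or> (a \<bullet> dir L = 0 \<and> a \<bullet> base L \<le> b \<and> a \<bullet> dir M \<noteq> 0)
   \<or> (a \<bullet> dir L = 0 \<and> a \<bullet> base L \<le> b \<and> a \<bullet> dir M = 0 \<and> a \<bullet> base M \<le> b \<and> f L < f M)"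

lemma precedes_irrefl: "\<not> precedes a b f L L"
  by (auto simp: precedes_def)

lemma precedes_trans: "precedes a b f L M \<Longrightarrow> precedes a b f M N \<Longrightarrow> precedes a b f L N"
  unfolding precedes_def by auto

lemma precedes_meet_outside:
  assumes "a \<noteq> 0" "is_line L" "is_line M" "precedes a b f L M" "x \<in> L" "x \<in> M"
  shows "a \<bullet> x \<le> b"
proof (cases "a \<bullet> dir L = 0")
  case True
  thus ?thesis using assms(4) parallel_line_height[OF assms(2) True assms(5)]
    by (auto simp: precedes_def)
next
  case False
  hence cross: "a \<bullet> dir M \<noteq> 0" and order: "intercept a b L \<le> intercept a b M" "slope a L < slope a M"
    using assms(4) by (auto simp: precedes_def)
  have "intercept a b L + (a \<bullet> x - b) * slope a L = intercept a b M + (a \<bullet> x - b) * slope a M"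
    using crossing_line_graph[OF assms(1,2) False, where b = b] assms(5,6)
      crossing_line_graph[OF assms(1,3) cross, where b = b] by auto
  (* (a \<bullet> x - b) * (slope M - slope L) = intercept L - intercept M \<le> 0 with a positive factor *)
  thus ?thesis using order by (smt (verit) mult_strict_left_mono)
qed

lemma incomparable_meet_inside:
  assumes a0: "a \<noteq> 0" and lines: "is_line L" "is_line M" and "L \<noteq> M"
    and incomp: "\<not> precedes a b f L M" "\<not> precedes a b f M L"
    and pt: "x \<in> L" "x \<in> M" and labels: "f L \<noteq> f M"
  shows "a \<bullet> x > b"
proof (cases "a \<bullet> dir L = 0 \<or> a \<bullet> dir M = 0")
  case True
  hence "a \<bullet> base L > b \<and> a \<bullet> dir L = 0 \<or> a \<bullet> base M > b \<and> a \<bullet> dir M = 0"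
    using labels incomp unfolding precedes_def by (metis linorder_neqE_nat not_le)
  thus ?thesis using parallel_line_height[OF lines(1) _ pt(1)] parallel_line_height[OF lines(2) _ pt(2)]
    by auto
next
  case False
  hence cross: "a \<bullet> dir L \<noteq> 0" "a \<bullet> dir M \<noteq> 0" by auto
  have graph: "intercept a b L + (a \<bullet> x - b) * slope a L = intercept a b M + (a \<bullet> x - b) * slope a M"
    using crossing_line_graph[OF a0 lines(1) cross(1), where b = b] pt
      crossing_line_graph[OF a0 lines(2) cross(2), where b = b] by auto
  have "slope a L \<noteq> slope a M"
  proof
    assume same_slope: "slope a L = slope a M"
    hence "intercept a b L = intercept a b M" using graph by simp
    thus False using crossing_line_eqI[OF a0 lines(1) cross(1) lines(2) cross(2) _ same_slope]
      \<open>L \<noteq> M\<close> by blast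
  qed
  moreover have "\<not> (intercept a b L \<le> intercept a b M \<and> slope a L < slope a M)"
    "\<not> (intercept a b M \<le> intercept a b L \<and> slope a M < slope a L)"
    using incomp cross by (auto simp: precedes_def)
  (* at height a \<bullet> x - b \<le> 0 the line with the larger slope would have the smaller intercept *)
  ultimately show ?thesis using graph
    by (smt (verit) mult_left_mono_neg)
qed

lemma mu_candidates_finite: "finite A \<Longrightarrow> finite {card A' | A'. A' \<subseteq> A \<and> V A' \<subseteq> S}"
  by (rule finite_subset[of _ "card ` Pow A"]) auto

lemma mu_ge:
  assumes "finite A" "B \<subseteq> A" "V B \<subseteq> S"
  shows "card B \<le> mu A S"
  unfolding mu_def using mu_candidates_finite[OF assms(1)] assms(2,3) by (intro Max_ge) auto

lemma mu_attained:
  assumes "finite A"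
  obtains B where "B \<subseteq> A" "V B \<subseteq> S" "card B = mu A S"
proof -
  have "V {} = {}" unfolding V_def by auto
  hence "{card A' | A'. A' \<subseteq> A \<and> V A' \<subseteq> S} \<noteq> {}" by blast
  from Max_in[OF mu_candidates_finite[OF assms] this] show ?thesis
    using that unfolding mu_def by auto
qed

lemma V_mono: "B \<subseteq> C \<Longrightarrow> V B \<subseteq> V C"
  unfolding V_def by blast

(* A chain whose vertices lie in the halfplane or in S has all of them in S, so it counts
   towards mu A S. *)
lemma chain_card_le_mu:
  assumes "finite A" "a \<noteq> 0" "C \<subseteq> A" "\<forall>L\<in>C. is_line L"
    and vertices: "V C \<subseteq> {x. a \<bullet> x > b} \<union> S"
    and chain: "\<forall>L\<in>C. \<forall>M\<in>C. L \<noteq> M \<longrightarrow> precedes a b f L M \<or> precedes a b f M L"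
  shows "card C \<le> mu A S"
proof -
  have "V C \<subseteq> S"
  proof
    fix x assume "x \<in> V C"
    then obtain L M where LM: "L \<in> C" "M \<in> C" "L \<noteq> M" "x \<in> L" "x \<in> M"
      unfolding V_def by blast
    have "precedes a b f L M \<or> precedes a b f M L" using chain LM(1-3) by blast
    hence "a \<bullet> x \<le> b"
      using precedes_meet_outside[OF assms(2), of L M] precedes_meet_outside[OF assms(2), of M L]
        assms(4) LM by auto
    thus "x \<in> S" using vertices \<open>x \<in> V C\<close> by auto
  qed
  thus ?thesis using mu_ge[OF assms(1,3)] by blast
qed

(* All vertices of an antichain lie in the halfplane, so it counts towards its mu. *)
lemma antichain_card_le_mu:
  assumes "finite A" "a \<noteq> 0" "C \<subseteq> A" "\<forall>L\<in>C. is_line L" "inj_on f C"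
    and antichain: "\<forall>L\<in>C. \<forall>M\<in>C. \<not> precedes a b f L M"
  shows "card C \<le> mu A {x. a \<bullet> x > b}"
proof -
  have "V C \<subseteq> {x. a \<bullet> x > b}"
  proof
    fix x assume "x \<in> V C"
    then obtain L M where LM: "L \<in> C" "M \<in> C" "L \<noteq> M" "x \<in> L" "x \<in> M"
      unfolding V_def by blast
    have "is_line L" "is_line M" "f L \<noteq> f M" using LM(1-3) assms(4,5) by (auto dest: inj_onD)
    moreover have "\<not> precedes a b f L M" "\<not> precedes a b f M L" using antichain LM(1,2) by auto
    ultimately show "x \<in> {x. a \<bullet> x > b}"
      using incomparable_meet_inside[OF assms(2) _ _ LM(3) _ _ LM(4,5)] by simp
  qed
  thus ?thesis using mu_ge[OF assms(1,3)] by blast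
qed

theorem lemma1:
  fixes A :: "(real^2) set set" and S1 S2 :: "(real^2) set"
  assumes "finite A" and "\<forall>L\<in>A. is_line L"
    and "open_halfplane S1"
  shows "mu A (S1 \<union> S2) \<le> mu A S1 * mu A S2"
proof -
  obtain a b where a0: "a \<noteq> 0" and S1: "S1 = {x. a \<bullet> x > b}"
    using assms(3) unfolding open_halfplane_def by blast
  obtain f :: "(real^2) set \<Rightarrow> nat" where inj: "inj_on f A"
    using finite_imp_inj_to_nat_seg[OF assms(1)] by blast
  obtain B where BA: "B \<subseteq> A" and VB: "V B \<subseteq> S1 \<union> S2" and cB: "card B = mu A (S1 \<union> S2)"
    using mu_attained[OF assms(1)] by blast
  have sub: "C \<subseteq> A" "\<forall>L\<in>C. is_line L" "inj_on f C" if "C \<subseteq> B" for C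
    using that BA assms(2) inj_on_subset[OF inj] by blast+
  have "card B \<le> mu A S2 * mu A S1"
  proof (rule card_le_chain_times_antichain[where R = "precedes a b f"])
    fix C assume CB: "C \<subseteq> B"
      and chain: "\<forall>L\<in>C. \<forall>M\<in>C. L \<noteq> M \<longrightarrow> precedes a b f L M \<or> precedes a b f M L"
    have "V C \<subseteq> {x. a \<bullet> x > b} \<union> S2" using V_mono[OF CB] VB S1 by blast
    thus "card C \<le> mu A S2" by (rule chain_card_le_mu[OF assms(1) a0 sub(1,2)[OF CB] _ chain])
  next
    fix C assume CB: "C \<subseteq> B" and antichain: "\<forall>L\<in>C. \<forall>M\<in>C. \<not> precedes a b f L M"
    show "card C \<le> mu A S1"
      unfolding S1 by (rule antichain_card_le_mu[OF assms(1) a0 sub[OF CB] antichain])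
  qed (use finite_subset[OF BA assms(1)] precedes_irrefl precedes_trans in auto)
  thus ?thesis using cB by (simp add: mult.commute)
qed

end
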